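(* If $G$ is a connected cubic bipartite graph of order at most $12$, then $\gamma_{\rm i}(G)=\frac{n(G)}{2}=\alpha(G)$.
   Context: $n(G)$ is the number of vertices and $\alpha(G)$ the independence number. Indicated domination game on $G$: two players, Dominator and Staller, alternate. In each round Dominator indicates a vertex $v$ not yet dominated by the vertices previously selected by Staller (a vertex dominates itself and its neighbors), and Staller must select a vertex of the closed neighborhood $N[v]$, adding it to a set $D$. The game ends when $D$ is a dominating set of $G$. Dominator wants to minimize $|D|$ and Staller to maximize it; the size of $D$ under optimal play of both is the indicated domination number $\gamma_{\rm i}(G)$. *)

theory Defs
  imports Complex_Main
begin

definition simple_graph :: "'a set \<Rightarrow> ('a \<Rightarrow> 'a \<Rightarrow> bool) \<Rightarrow> bool" where
  "simple_graph V E \<longleftrightarrow> finite V \<and> (\<forall>x y. E x y \<longrightarrow> x \<in> V \<and> y \<in> V)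
     \<and> (\<forall>x y. E x y \<longrightarrow> E y x) \<and> (\<forall>x. \<not> E x x)"

definition closed_nbhd :: "('a \<Rightarrow> 'a \<Rightarrow> bool) \<Rightarrow> 'a \<Rightarrow> 'a set" where
  "closed_nbhd E v = insert v {u. E v u}"

definition cubic :: "'a set \<Rightarrow> ('a \<Rightarrow> 'a \<Rightarrow> bool) \<Rightarrow> bool" where
  "cubic V E \<longleftrightarrow> (\<forall>v\<in>V. card {u. E v u} = 3)"

definition connected_graph :: "'a set \<Rightarrow> ('a \<Rightarrow> 'a \<Rightarrow> bool) \<Rightarrow> bool" where
  "connected_graph V E \<longleftrightarrow> V \<noteq> {} \<and> (\<forall>x\<in>V. \<forall>y\<in>V. E\<^sup>*\<^sup>* x y)"

definition bipartite :: "'a set \<Rightarrow> ('a \<Rightarrow> 'a \<Rightarrow> bool) \<Rightarrow> bool" where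
  "bipartite V E \<longleftrightarrow> (\<exists>A B. A \<union> B = V \<and> A \<inter> B = {} \<and>
      (\<forall>x y. E x y \<longrightarrow> (x \<in> A \<and> y \<in> B) \<or> (x \<in> B \<and> y \<in> A)))"

definition independent_set :: "'a set \<Rightarrow> ('a \<Rightarrow> 'a \<Rightarrow> bool) \<Rightarrow> 'a set \<Rightarrow> bool" where
  "independent_set V E S \<longleftrightarrow> S \<subseteq> V \<and> (\<forall>x\<in>S. \<forall>y\<in>S. \<not> E x y)"

definition independence_number :: "'a set \<Rightarrow> ('a \<Rightarrow> 'a \<Rightarrow> bool) \<Rightarrow> nat" where
  "independence_number V E = Max (card ` {S. independent_set V E S})"

definition dominated :: "('a \<Rightarrow> 'a \<Rightarrow> bool) \<Rightarrow> 'a set \<Rightarrow> 'a \<Rightarrow> bool" where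
  "dominated E D x \<longleftrightarrow> x \<in> D \<or> (\<exists>y\<in>D. E y x)"

definition dominating :: "'a set \<Rightarrow> ('a \<Rightarrow> 'a \<Rightarrow> bool) \<Rightarrow> 'a set \<Rightarrow> bool" where
  "dominating V E D \<longleftrightarrow> (\<forall>x\<in>V. dominated E D x)"

text \<open>Indicated domination game: from a position D (the vertices selected so far by
  Staller), Dominator can guarantee that the game ends with at most k further
  selections.  Each round Dominator indicates an undominated vertex v and Staller
  selects any vertex of N[v].\<close>
primrec dom_can_force :: "'a set \<Rightarrow> ('a \<Rightarrow> 'a \<Rightarrow> bool) \<Rightarrow> nat \<Rightarrow> 'a set \<Rightarrow> bool" where
  "dom_can_force V E 0 D \<longleftrightarrow> dominating V E D"
| "dom_can_force V E (Suc k) D \<longleftrightarrow> dominating V E D \<or>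
     (\<exists>v\<in>V. \<not> dominated E D v \<and>
        (\<forall>u\<in>closed_nbhd E v. dom_can_force V E k (insert u D)))"

definition indicated_domination_number :: "'a set \<Rightarrow> ('a \<Rightarrow> 'a \<Rightarrow> bool) \<Rightarrow> nat" where
  "indicated_domination_number V E = (LEAST k. dom_can_force V E k {})"

end

theory Submission
  imports Defs
begin

(* Let A, B be the colour classes of the cubic bipartite graph; double counting edges gives
   |A| = |B| = n/2, and by the same count every independent set has at most n/2 vertices.
   Staller can always select a vertex of A (every closed neighbourhood meets A), and a vertex of A
   is dominated by a subset of A only if it belongs to it, so the game lasts at least |A| rounds.
   Dominator first indicates vertices whose closed neighbourhood is entirely undominated; the
   selected vertices then form an independent set, so this happens at most n/2 times.  Once every
   closed neighbourhood contains a dominated vertex, the number of undominated vertices plus the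
   number of moves so far is at most n/2: if the selected set meets both classes, two disjoint
   neighbourhoods provide 6 >= n/2 dominated vertices outside it; otherwise a whole colour class is
   dominated without being selected.  Indicating any undominated vertex finishes the game in time. *)

locale finite_simple_graph =
  fixes V :: "'a set" and E :: "'a \<Rightarrow> 'a \<Rightarrow> bool"
  assumes simple: "simple_graph V E"
begin

lemma finite_V: "finite V"
  using simple by (simp add: simple_graph_def)

lemma edge_sym: "E x y \<Longrightarrow> E y x"
  using simple by (simp add: simple_graph_def)

lemma edge_in_V: "E x y \<Longrightarrow> x \<in> V" "E x y \<Longrightarrow> y \<in> V"
  using simple by (simp_all add: simple_graph_def)

lemma finite_neighbours: "finite {u. E v u}"
  using finite_V edge_in_V(2) by (auto intro: finite_subset)

lemma dominated_if_in_closed_nbhd: "u \<in> closed_nbhd E v \<Longrightarrow> u \<in> D \<Longrightarrow> dominated E D v"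
  by (auto simp: closed_nbhd_def dominated_def dest: edge_sym)

lemma independent_set_insert:
  assumes "independent_set V E D" "u \<in> V" "\<not> dominated E D u"
  shows "independent_set V E (insert u D)"
  using assms simple by (auto simp: independent_set_def dominated_def simple_graph_def)

lemma dom_can_force_if_card_undominated_le:
  "card {x\<in>V. \<not> dominated E D x} \<le> k \<Longrightarrow> dom_can_force V E k D"
proof (induction k arbitrary: D)
  case 0
  then show ?case using finite_V by (auto simp: dominating_def)
next
  case (Suc k)
  show ?case
  proof (cases "dominating V E D")
    case False
    then obtain v where v: "v \<in> V" "\<not> dominated E D v" by (auto simp: dominating_def)
    have "dom_can_force V E k (insert u D)" if u: "u \<in> closed_nbhd E v" for u
    proof -
      have "{x\<in>V. \<not> dominated E (insert u D) x} \<subset> {x\<in>V. \<not> dominated E D x}"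
        using v dominated_if_in_closed_nbhd[OF u] by (auto simp: dominated_def)
      then have "card {x\<in>V. \<not> dominated E (insert u D) x} < card {x\<in>V. \<not> dominated E D x}"
        using finite_V by (auto intro: psubset_card_mono)
      then show ?thesis using Suc by simp
    qed
    then show ?thesis using v by auto
  qed simp
qed

lemma card_le_card_if_neighbours_in:
  assumes "cubic V E" "X \<subseteq> V" "Y \<subseteq> V" and nbrs: "\<And>x y. x \<in> X \<Longrightarrow> E x y \<Longrightarrow> y \<in> Y"
  shows "card X \<le> card Y"
proof -
  have fin: "finite X" "finite Y" using assms(2,3) finite_V by (auto intro: finite_subset)
  have "3 * card X = (\<Sum>x\<in>X. card {y. E x y})"
    using assms(1,2) by (simp add: cubic_def subset_iff)
  also have "\<dots> = (\<Sum>x\<in>X. card {y\<in>Y. E x y})"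
    using nbrs by (intro sum.cong refl arg_cong[where f = card]) auto
  also have "\<dots> = (\<Sum>y\<in>Y. card {x\<in>X. E x y})"
    using sum.swap_restrict[OF fin, of "\<lambda>_ _. 1::nat"] by simp
  also have "\<dots> \<le> (\<Sum>y\<in>Y. card {x. E y x})"
    by (intro sum_mono card_mono finite_neighbours) (auto dest: edge_sym)
  also have "\<dots> = 3 * card Y"
    using assms(1,3) by (simp add: cubic_def subset_iff)
  finally show ?thesis by simp
qed

end

locale bipartite_graph = finite_simple_graph +
  fixes A B :: "'a set"
  assumes parts_Un: "A \<union> B = V" and parts_disjoint: "A \<inter> B = {}"
    and edge_parts: "E x y \<Longrightarrow> x \<in> A \<and> y \<in> B \<or> x \<in> B \<and> y \<in> A"
begin

lemma bipartite_graph_swap: "bipartite_graph V E B A"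
  using parts_Un parts_disjoint edge_parts by unfold_locales blast+

lemma edge_A_B: "E x y \<Longrightarrow> x \<in> A \<Longrightarrow> y \<in> B"
  and edge_B_A: "E x y \<Longrightarrow> x \<in> B \<Longrightarrow> y \<in> A"
  using edge_parts parts_disjoint by blast+

lemma A_subset_V: "A \<subseteq> V" and B_subset_V: "B \<subseteq> V"
  using parts_Un by blast+

lemma finite_A: "finite A" and finite_B: "finite B"
  using A_subset_V B_subset_V finite_V by (auto intro: finite_subset)

lemma independent_set_A: "independent_set V E A"
  using A_subset_V edge_A_B parts_disjoint by (auto simp: independent_set_def)

lemma dominated_by_subset_A_iff:
  assumes "D \<subseteq> A" "a \<in> A"
  shows "dominated E D a \<longleftrightarrow> a \<in> D"
  using assms edge_A_B parts_disjoint by (auto simp: dominated_def)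

lemma card_A_diff_eq_0_if_dominating:
  assumes "D \<subseteq> A" "dominating V E D"
  shows "card (A - D) = 0"
proof -
  have "A \<subseteq> D"
    using assms A_subset_V dominated_by_subset_A_iff unfolding dominating_def by blast
  then show ?thesis by (simp add: card_eq_0_iff)
qed

lemma closed_nbhd_meets_A:
  assumes "\<exists>u. E v u"
  obtains u where "u \<in> closed_nbhd E v" "u \<in> A"
proof (cases "v \<in> A")
  case False
  with assms obtain u where "E v u" by blast
  with False edge_parts[OF this] show ?thesis
    using that by (auto simp: closed_nbhd_def)
qed (auto intro: that simp: closed_nbhd_def)

lemma card_A_diff_le_if_dom_can_force:
  assumes no_isolated: "\<forall>v\<in>V. \<exists>u. E v u"
  shows "D \<subseteq> A \<Longrightarrow> dom_can_force V E k D \<Longrightarrow> card (A - D) \<le> k"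
proof (induction k arbitrary: D)
  case 0
  then show ?case using card_A_diff_eq_0_if_dominating by simp
next
  case (Suc k)
  show ?case
  proof (cases "dominating V E D")
    case True
    then show ?thesis using card_A_diff_eq_0_if_dominating Suc.prems(1) by simp
  next
    case False
    then obtain v where v: "v \<in> V" "\<not> dominated E D v"
      and responses: "\<forall>u\<in>closed_nbhd E v. dom_can_force V E k (insert u D)"
      using Suc.prems by auto
    obtain u where u: "u \<in> closed_nbhd E v" "u \<in> A"
      using closed_nbhd_meets_A no_isolated v(1) by blast
    have "u \<notin> D" using dominated_if_in_closed_nbhd[OF u(1)] v(2) by blast
    have "insert u D \<subseteq> A" using Suc.prems(1) u(2) by simp
    then have "card (A - insert u D) \<le> k"
      using Suc.IH responses u(1) by blast
    moreover have "A - insert u D = (A - D) - {u}" by blast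
    moreover have "Suc (card ((A - D) - {u})) = card (A - D)"
      using finite_A u(2) \<open>u \<notin> D\<close> by (intro card_Suc_Diff1) auto
    ultimately show ?thesis by simp
  qed
qed

lemma dominated_if_disjoint_side:
  assumes "D \<subseteq> V" "D \<inter> A = {}"
    and "\<forall>v\<in>V. \<exists>x\<in>closed_nbhd E v. dominated E D x" and "a \<in> A"
  shows "dominated E D a"
proof (rule ccontr)
  assume undominated: "\<not> dominated E D a"
  obtain x where x: "x \<in> closed_nbhd E a" "dominated E D x"
    using assms(3,4) A_subset_V by blast
  then have "E a x" using undominated by (auto simp: closed_nbhd_def)
  then have "x \<in> B" using edge_A_B assms(4) by blast
  have "x \<notin> D" using dominated_if_in_closed_nbhd[OF x(1)] undominated by blast
  then obtain d where d: "d \<in> D" "E d x" using x(2) by (auto simp: dominated_def)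
  then have "d \<in> B" using assms(1,2) parts_Un by blast
  then have "x \<in> A" using edge_B_A d(2) by blast
  then show False using \<open>x \<in> B\<close> parts_disjoint by blast
qed

end

locale cubic_bipartite_graph = bipartite_graph +
  assumes cubic: "cubic V E"
begin

lemma card_A_eq_card_B: "card A = card B"
  by (intro antisym card_le_card_if_neighbours_in[OF cubic])
    (use A_subset_V B_subset_V edge_A_B edge_B_A in blast)+

lemma card_V_eq: "card V = 2 * card A"
  using card_Un_disjoint[OF finite_A finite_B parts_disjoint] parts_Un card_A_eq_card_B by simp

lemma card_independent_set_le:
  assumes "independent_set V E S"
  shows "card S \<le> card A"
proof -
  have S: "S \<subseteq> V" "\<And>x y. x \<in> S \<Longrightarrow> y \<in> S \<Longrightarrow> \<not> E x y"
    using assms by (auto simp: independent_set_def)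
  have "card (A \<inter> S) \<le> card (B - S)"
    using S B_subset_V edge_A_B by (intro card_le_card_if_neighbours_in[OF cubic]) auto
  also have "\<dots> = card B - card (B \<inter> S)"
    using finite_B by (simp add: card_Diff_subset_Int)
  finally have "card (A \<inter> S) + card (B \<inter> S) \<le> card B"
    using card_mono[OF finite_B Int_lower1, of S] by linarith
  moreover have "card S = card (A \<inter> S) + card (B \<inter> S)"
  proof -
    have "card ((A \<inter> S) \<union> (B \<inter> S)) = card (A \<inter> S) + card (B \<inter> S)"
      using finite_A finite_B parts_disjoint by (intro card_Un_disjoint) auto
    moreover have "(A \<inter> S) \<union> (B \<inter> S) = S" using S(1) parts_Un by blast
    ultimately show ?thesis by simp
  qed
  ultimately show ?thesis using card_A_eq_card_B by simp
qed

lemma independence_number_eq: "independence_number V E = card A"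
  unfolding independence_number_def
proof (rule Max_eqI)
  have "{S. independent_set V E S} \<subseteq> Pow V" by (auto simp: independent_set_def)
  then show "finite (card ` {S. independent_set V E S})"
    using finite_V by (auto intro: finite_subset)
qed (use card_independent_set_le independent_set_A in auto)

lemma neighbour_exists:
  assumes "v \<in> V"
  shows "\<exists>u. E v u"
proof -
  have "card {u. E v u} = 3" using cubic assms by (simp add: cubic_def)
  then have "{u. E v u} \<noteq> {}" by (metis card.empty zero_neq_numeral)
  then show ?thesis by blast
qed

lemma card_A_le_if_dom_can_force: "dom_can_force V E k {} \<Longrightarrow> card A \<le> k"
  using card_A_diff_le_if_dom_can_force[of "{}" k] neighbour_exists by simp

lemma card_A_le_card_dominated_outside:
  assumes "card A \<le> 6" "independent_set V E D"
    and no_fresh: "\<forall>v\<in>V. \<exists>x\<in>closed_nbhd E v. dominated E D x"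
  shows "card A \<le> card ({x\<in>V. dominated E D x} - D)" (is "_ \<le> card ?X")
proof -
  have "finite ?X" using finite_V by simp
  have D_subset_V: "D \<subseteq> V" using assms(2) by (simp add: independent_set_def)
  have neighbours_in_X: "{y. E d y} \<subseteq> ?X" if "d \<in> D" for d
    using assms(2) that edge_in_V(2) by (auto simp: independent_set_def dominated_def)
  consider (both) a b where "a \<in> D \<inter> A" "b \<in> D \<inter> B" | (no_A) "D \<inter> A = {}" | (no_B) "D \<inter> B = {}"
    by blast
  then show ?thesis
  proof cases
    case both
    then have "a \<in> V" "b \<in> V" using A_subset_V B_subset_V by auto
    moreover have "{y. E a y} \<inter> {y. E b y} = {}"
      using both edge_A_B edge_B_A parts_disjoint by blast
    ultimately have "card ({y. E a y} \<union> {y. E b y}) = 6"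
      using cubic finite_neighbours by (simp add: card_Un_disjoint cubic_def)
    moreover have "card ({y. E a y} \<union> {y. E b y}) \<le> card ?X"
      using both neighbours_in_X \<open>finite ?X\<close> by (intro card_mono) auto
    ultimately show ?thesis using assms(1) by simp
  next
    case no_A
    then have "A \<subseteq> ?X"
      using dominated_if_disjoint_side[OF D_subset_V no_A no_fresh] A_subset_V by blast
    then show ?thesis using card_mono[OF \<open>finite ?X\<close>] by blast
  next
    case no_B
    then have "B \<subseteq> ?X"
      using bipartite_graph.dominated_if_disjoint_side[OF bipartite_graph_swap D_subset_V no_B no_fresh]
        B_subset_V by blast
    then show ?thesis using card_mono[OF \<open>finite ?X\<close>] card_A_eq_card_B by simp
  qed
qed

lemma card_undominated_add_card_le:
  assumes "card A \<le> 6" "independent_set V E D"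
    and "\<forall>v\<in>V. \<exists>x\<in>closed_nbhd E v. dominated E D x"
  shows "card {x\<in>V. \<not> dominated E D x} + card D \<le> card A"
proof -
  let ?Dom = "{x\<in>V. dominated E D x}"
  have "D \<subseteq> ?Dom" using assms(2) by (auto simp: independent_set_def dominated_def)
  have "{x\<in>V. \<not> dominated E D x} = V - ?Dom" by blast
  then have "card {x\<in>V. \<not> dominated E D x} = card V - card ?Dom"
    using finite_V by (simp add: card_Diff_subset)
  moreover have "card (?Dom - D) = card ?Dom - card D"
    using \<open>D \<subseteq> ?Dom\<close> finite_V by (intro card_Diff_subset) (auto intro: finite_subset)
  moreover have "card ?Dom \<le> card V" using finite_V by (intro card_mono) auto
  moreover have "card D \<le> card ?Dom"
    using \<open>D \<subseteq> ?Dom\<close> finite_V by (intro card_mono) auto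
  ultimately show ?thesis
    using card_A_le_card_dominated_outside[OF assms] card_V_eq by linarith
qed

lemma card_lt_card_A_if_undominated:
  assumes "independent_set V E D" "v \<in> V" "\<not> dominated E D v"
  shows "card D < card A"
proof -
  have "card (insert v D) \<le> card A"
    using independent_set_insert[OF assms] by (rule card_independent_set_le)
  moreover have "v \<notin> D" using assms(3) by (simp add: dominated_def)
  moreover have "finite D"
    using assms(1) finite_V by (auto simp: independent_set_def intro: finite_subset)
  ultimately show ?thesis by simp
qed

lemma dom_can_force_if_closed_nbhds_dominated:
  assumes "card A \<le> 6" "independent_set V E D" "card A \<le> card D + k"
    and "\<forall>v\<in>V. \<exists>x\<in>closed_nbhd E v. dominated E D x"
  shows "dom_can_force V E k D"
  using card_undominated_add_card_le[OF assms(1,2,4)] assms(3)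
  by (intro dom_can_force_if_card_undominated_le) linarith

lemma dom_can_force_if_independent:
  assumes "card A \<le> 6"
  shows "independent_set V E D \<Longrightarrow> card A \<le> card D + k \<Longrightarrow> dom_can_force V E k D"
proof (induction k arbitrary: D)
  case 0
  show ?case
  proof (cases "\<forall>v\<in>V. \<exists>x\<in>closed_nbhd E v. dominated E D x")
    case False
    then obtain v where "v \<in> V" "\<not> dominated E D v" by (auto simp: closed_nbhd_def)
    then show ?thesis using card_lt_card_A_if_undominated 0 by fastforce
  qed (use dom_can_force_if_closed_nbhds_dominated assms 0 in blast)
next
  case (Suc k)
  show ?case
  proof (cases "\<forall>v\<in>V. \<exists>x\<in>closed_nbhd E v. dominated E D x")
    case False
    then obtain v where v: "v \<in> V" and fresh: "\<forall>x\<in>closed_nbhd E v. \<not> dominated E D x"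
      by blast
    have "dom_can_force V E k (insert u D)" if u: "u \<in> closed_nbhd E v" for u
    proof -
      have "u \<in> V" "\<not> dominated E D u"
        using u v fresh edge_in_V(2) by (auto simp: closed_nbhd_def)
      then have "u \<notin> D" "finite D" "independent_set V E (insert u D)"
        using Suc.prems(1) independent_set_insert finite_V
        by (auto simp: dominated_def independent_set_def intro: finite_subset)
      then show ?thesis using Suc.IH Suc.prems(2) by simp
    qed
    then show ?thesis using v fresh by (auto simp: closed_nbhd_def)
  qed (use dom_can_force_if_closed_nbhds_dominated assms Suc.prems in blast)
qed

lemma indicated_domination_number_eq:
  assumes "card A \<le> 6"
  shows "indicated_domination_number V E = card A"
  unfolding indicated_domination_number_def
proof (rule Least_equality)
  show "dom_can_force V E (card A) {}"
    using dom_can_force_if_independent[OF assms] by (simp add: independent_set_def)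
qed (rule card_A_le_if_dom_can_force)

end

theorem proposition5p5:
  fixes V :: "'a set" and E :: "'a \<Rightarrow> 'a \<Rightarrow> bool"
  assumes "simple_graph V E"
    and "connected_graph V E"
    and "cubic V E"
    and "bipartite V E"
    and "card V \<le> 12"
  shows "real (indicated_domination_number V E) = real (card V) / 2
       \<and> real (card V) / 2 = real (independence_number V E)"
proof -
  obtain A B where "A \<union> B = V" "A \<inter> B = {}"
    and "\<forall>x y. E x y \<longrightarrow> x \<in> A \<and> y \<in> B \<or> x \<in> B \<and> y \<in> A"
    using assms(4) unfolding bipartite_def by blast
  then interpret cubic_bipartite_graph V E A B
    using assms(1,3) by unfold_locales auto
  have "card A \<le> 6" using assms(5) card_V_eq by simp
  then show ?thesis
    using indicated_domination_number_eq independence_number_eq card_V_eq by simp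
qed

end
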